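(* Let $X$ be a connected vertex-transitive cubic graph containing a cycle of length $3$. Then $1$ is a simple eigenvalue of $X$ if and only if $X\cong T(G)$ for some connected, bipartite, arc-transitive cubic multigraph $G$.
   Context: The truncation $T(G)$ of a cubic multigraph $G$ is the cubic graph obtained by replacing every vertex $v$ of $G$ by a triangle whose three vertices correspond to the three edge-ends at $v$, each edge $uv$ of $G$ giving an edge between the corresponding vertices of the triangles of $u$ and $v$. Eigenvalues are those of the adjacency matrix; simple means a $1$-dimensional eigenspace. *)

theory Defs
  imports "HOL-Analysis.Analysis"
begin

definition simple_graph :: "('a \<Rightarrow> 'a \<Rightarrow> bool) \<Rightarrow> bool" where
  "simple_graph E \<longleftrightarrow> (\<forall>u v. E u v \<longrightarrow> E v u) \<and> (\<forall>v. \<not> E v v)"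

definition cubic_graph :: "('a \<Rightarrow> 'a \<Rightarrow> bool) \<Rightarrow> bool" where
  "cubic_graph E \<longleftrightarrow> simple_graph E \<and> (\<forall>v. card {u. E v u} = 3)"

definition connected_graph :: "('a \<Rightarrow> 'a \<Rightarrow> bool) \<Rightarrow> bool" where
  "connected_graph E \<longleftrightarrow> (\<forall>u v. E\<^sup>*\<^sup>* u v)"

definition graph_automorphism :: "('a \<Rightarrow> 'a \<Rightarrow> bool) \<Rightarrow> ('a \<Rightarrow> 'a) \<Rightarrow> bool" where
  "graph_automorphism E f \<longleftrightarrow> bij f \<and> (\<forall>x y. E x y \<longleftrightarrow> E (f x) (f y))"

definition vertex_transitive :: "('a \<Rightarrow> 'a \<Rightarrow> bool) \<Rightarrow> bool" where
  "vertex_transitive E \<longleftrightarrow> (\<forall>u v. \<exists>f. graph_automorphism E f \<and> f u = v)"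

definition has_triangle :: "('a \<Rightarrow> 'a \<Rightarrow> bool) \<Rightarrow> bool" where
  "has_triangle E \<longleftrightarrow> (\<exists>a b c. a \<noteq> b \<and> b \<noteq> c \<and> a \<noteq> c \<and> E a b \<and> E b c \<and> E c a)"

definition adj_matrix :: "('a::finite \<Rightarrow> 'a \<Rightarrow> bool) \<Rightarrow> real^'a^'a" where
  "adj_matrix E = (\<chi> i j. if E i j then 1 else 0)"

definition eigenspace :: "real^'n^'n \<Rightarrow> real \<Rightarrow> (real^'n) set" where
  "eigenspace A c = {x. A *v x = c *\<^sub>R x}"

definition simple_eigenvalue :: "real^'n^'n \<Rightarrow> real \<Rightarrow> bool" where
  "simple_eigenvalue A c \<longleftrightarrow> dim (eigenspace A c) = 1"

text \<open>A multigraph G is given by a finite vertex set VG, a finite set D of darts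
(arcs = edge-ends), a map vert sending a dart to its initial vertex, and a
fixed-point-free involution rv on D reversing darts. Edges are the orbits
{d, rv d}; parallel edges and loops (vert d = vert (rv d)) are allowed.\<close>

definition cubic_multigraph ::
  "nat set \<Rightarrow> nat set \<Rightarrow> (nat \<Rightarrow> nat) \<Rightarrow> (nat \<Rightarrow> nat) \<Rightarrow> bool" where
  "cubic_multigraph VG D vert rv \<longleftrightarrow>
     finite VG \<and> finite D \<and>
     (\<forall>d\<in>D. vert d \<in> VG \<and> rv d \<in> D \<and> rv (rv d) = d \<and> rv d \<noteq> d) \<and>
     (\<forall>v\<in>VG. card {d\<in>D. vert d = v} = 3)"

definition mg_adj :: "nat set \<Rightarrow> (nat \<Rightarrow> nat) \<Rightarrow> (nat \<Rightarrow> nat) \<Rightarrow> nat \<Rightarrow> nat \<Rightarrow> bool" where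
  "mg_adj D vert rv u v \<longleftrightarrow> (\<exists>d\<in>D. vert d = u \<and> vert (rv d) = v)"

definition mg_connected ::
  "nat set \<Rightarrow> nat set \<Rightarrow> (nat \<Rightarrow> nat) \<Rightarrow> (nat \<Rightarrow> nat) \<Rightarrow> bool" where
  "mg_connected VG D vert rv \<longleftrightarrow> (\<forall>u\<in>VG. \<forall>v\<in>VG. (mg_adj D vert rv)\<^sup>*\<^sup>* u v)"

definition mg_bipartite ::
  "nat set \<Rightarrow> nat set \<Rightarrow> (nat \<Rightarrow> nat) \<Rightarrow> (nat \<Rightarrow> nat) \<Rightarrow> bool" where
  "mg_bipartite VG D vert rv \<longleftrightarrow>
     (\<exists>c :: nat \<Rightarrow> bool. \<forall>d\<in>D. c (vert d) \<noteq> c (vert (rv d)))"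

definition mg_automorphism ::
  "nat set \<Rightarrow> nat set \<Rightarrow> (nat \<Rightarrow> nat) \<Rightarrow> (nat \<Rightarrow> nat) \<Rightarrow> (nat \<Rightarrow> nat) \<Rightarrow> (nat \<Rightarrow> nat) \<Rightarrow> bool" where
  "mg_automorphism VG D vert rv \<phi> \<psi> \<longleftrightarrow>
     bij_betw \<phi> VG VG \<and> bij_betw \<psi> D D \<and>
     (\<forall>d\<in>D. vert (\<psi> d) = \<phi> (vert d) \<and> \<psi> (rv d) = rv (\<psi> d))"

definition mg_arc_transitive ::
  "nat set \<Rightarrow> nat set \<Rightarrow> (nat \<Rightarrow> nat) \<Rightarrow> (nat \<Rightarrow> nat) \<Rightarrow> bool" where
  "mg_arc_transitive VG D vert rv \<longleftrightarrow>
     (\<forall>d\<in>D. \<forall>d'\<in>D. \<exists>\<phi> \<psi>. mg_automorphism VG D vert rv \<phi> \<psi> \<and> \<psi> d = d')"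

text \<open>Truncation T(G): its vertices are the darts of G (the edge-ends); the three
darts at a vertex form a triangle, and each dart d is joined to its reverse rv d.\<close>
definition trunc_adj :: "nat set \<Rightarrow> (nat \<Rightarrow> nat) \<Rightarrow> (nat \<Rightarrow> nat) \<Rightarrow> nat \<Rightarrow> nat \<Rightarrow> bool" where
  "trunc_adj D vert rv d d' \<longleftrightarrow>
     d \<in> D \<and> d' \<in> D \<and> ((d \<noteq> d' \<and> vert d = vert d') \<or> d' = rv d)"

definition iso_to_truncation ::
  "('a \<Rightarrow> 'a \<Rightarrow> bool) \<Rightarrow> nat set \<Rightarrow> (nat \<Rightarrow> nat) \<Rightarrow> (nat \<Rightarrow> nat) \<Rightarrow> bool" where
  "iso_to_truncation E D vert rv \<longleftrightarrow>
     (\<exists>f. bij_betw f UNIV D \<and> (\<forall>x y. E x y \<longleftrightarrow> trunc_adj D vert rv (f x) (f y)))"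

end

theory Submission
  imports Defs
begin

(* Let X = T(G) with G cubic and loopless.  If x is an eigenvector of T(G) for the eigenvalue 1
   and S v is the sum of x over the three darts at v, then the eigen-equations show that S is an
   eigenfunction of G for the eigenvalue -3, so S changes sign along every edge, and x d = S (vert d) / 3.
   Thus the 1-eigenspace of T(G) is the space of functions on G alternating along the edges; for
   connected G it is spanned by the colouring vector when G is bipartite and is zero otherwise.

   If X is cubic and vertex-transitive with a triangle, then either the neighbourhood of every vertex
   is a clique, and then a 1-eigenvector is constant along edges and therefore zero, or every vertex
   lies in exactly one triangle.  In the second case contracting the triangles gives a connected cubic
   multigraph G with X = T(G); the vertices of X are the darts of G, so G is arc-transitive. *)

section \<open>The eigenvalue 1 of a truncation\<close>

definition mg_loopless :: "nat set \<Rightarrow> (nat \<Rightarrow> nat) \<Rightarrow> (nat \<Rightarrow> nat) \<Rightarrow> bool" where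
  "mg_loopless D vert rv \<longleftrightarrow> (\<forall>d\<in>D. vert (rv d) \<noteq> vert d)"

definition mg_alternating :: "nat set \<Rightarrow> (nat \<Rightarrow> nat) \<Rightarrow> (nat \<Rightarrow> nat) \<Rightarrow> (nat \<Rightarrow> real) \<Rightarrow> bool" where
  "mg_alternating D vert rv \<sigma> \<longleftrightarrow> (\<forall>d\<in>D. \<sigma> (vert (rv d)) = - \<sigma> (vert d))"

lemma adj_matrix_mult_vec_nth:
  fixes E :: "'a::finite \<Rightarrow> 'a \<Rightarrow> bool"
  shows "(adj_matrix E *v x) $ i = (\<Sum>j | E i j. x $ j)"
proof -
  have "(adj_matrix E *v x) $ i = (\<Sum>j\<in>UNIV. (if E i j then 1 else 0) * x $ j)"
    by (simp add: matrix_vector_mult_def adj_matrix_def)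
  also have "\<dots> = (\<Sum>j\<in>UNIV. if E i j then x $ j else 0)"
    by (intro sum.cong) auto
  also have "\<dots> = (\<Sum>j | E i j. x $ j)"
    by (simp add: sum.If_cases)
  finally show ?thesis .
qed

lemma eigenspace_adj_matrix_1_iff:
  fixes E :: "'a::finite \<Rightarrow> 'a \<Rightarrow> bool"
  shows "x \<in> eigenspace (adj_matrix E) 1 \<longleftrightarrow> (\<forall>i. (\<Sum>j | E i j. x $ j) = x $ i)"
  by (simp add: eigenspace_def vec_eq_iff adj_matrix_mult_vec_nth)

lemma not_simple_eigenvalue_if_eigenspace_trivial:
  assumes "eigenspace A c \<subseteq> {0}"
  shows "\<not> simple_eigenvalue A c"
  using assms unfolding simple_eigenvalue_def by (metis dim_eq_0 zero_neq_one)

lemma cubic_multigraphD: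
  assumes "cubic_multigraph VG D vert rv" and "d \<in> D"
  shows "vert d \<in> VG" "rv d \<in> D" "rv (rv d) = d" "rv d \<noteq> d"
  using assms unfolding cubic_multigraph_def by auto

lemma cubic_multigraph_card_darts_at:
  assumes "cubic_multigraph VG D vert rv" and "v \<in> VG"
  shows "card {d\<in>D. vert d = v} = 3"
  using assms unfolding cubic_multigraph_def by auto

lemma cubic_multigraph_sum_darts_at:
  assumes G: "cubic_multigraph VG D vert rv"
  shows "(\<Sum>d\<in>D. g d) = (\<Sum>v\<in>VG. \<Sum>d\<in>{d\<in>D. vert d = v}. g d)"
proof -
  have "finite D" "finite VG" "vert ` D \<subseteq> VG"
    using G cubic_multigraphD(1)[OF G] unfolding cubic_multigraph_def by auto
  then show ?thesis
    by (simp add: sum.group)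
qed

lemma cubic_multigraph_sum_darts_at_vert:
  fixes g :: "nat \<Rightarrow> 'b::comm_semiring_1"
  assumes G: "cubic_multigraph VG D vert rv" and v: "v \<in> VG"
  shows "(\<Sum>d\<in>{d\<in>D. vert d = v}. g (vert d)) = 3 * g v"
proof -
  have "(\<Sum>d\<in>{d\<in>D. vert d = v}. g (vert d)) = (\<Sum>d\<in>{d\<in>D. vert d = v}. g v)"
    by (intro sum.cong) auto
  then show ?thesis
    using cubic_multigraph_card_darts_at[OF G v] by simp
qed

lemma cubic_multigraph_sum_vert:
  fixes g :: "nat \<Rightarrow> 'b::comm_semiring_1"
  assumes G: "cubic_multigraph VG D vert rv"
  shows "(\<Sum>d\<in>D. g (vert d)) = 3 * (\<Sum>v\<in>VG. g v)"
proof -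
  have "(\<Sum>d\<in>D. g (vert d)) = (\<Sum>v\<in>VG. \<Sum>d\<in>{d\<in>D. vert d = v}. g (vert d))"
    by (rule cubic_multigraph_sum_darts_at[OF G])
  also have "\<dots> = (\<Sum>v\<in>VG. 3 * g v)"
    by (intro sum.cong refl cubic_multigraph_sum_darts_at_vert[OF G])
  finally show ?thesis
    by (simp add: sum_distrib_left)
qed

lemma mg_bipartite_loopless: "mg_bipartite VG D vert rv \<Longrightarrow> mg_loopless D vert rv"
  unfolding mg_bipartite_def mg_loopless_def by metis

lemma mg_connected_invariant:
  assumes "mg_connected VG D vert rv"
    and "\<And>d. d \<in> D \<Longrightarrow> F (vert (rv d)) = F (vert d)"
    and "u \<in> VG" and "v \<in> VG"
  shows "F u = F v"
proof -
  have "(mg_adj D vert rv)\<^sup>*\<^sup>* u v"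
    using assms(1,3,4) unfolding mg_connected_def by blast
  then show ?thesis
    by induction (auto simp: mg_adj_def assms(2))
qed

lemma cubic_multigraph_alternating_if_eigenvalue_neg3:
  fixes S :: "nat \<Rightarrow> real"
  assumes G: "cubic_multigraph VG D vert rv"
    and eig: "\<And>v. v \<in> VG \<Longrightarrow> (\<Sum>d\<in>{d\<in>D. vert d = v}. S (vert (rv d))) = - 3 * S v"
  shows "mg_alternating D vert rv S"
proof -
  define P where "P = (\<Sum>v\<in>VG. S v ^ 2)"
  have square: "(\<Sum>d\<in>D. S (vert d) ^ 2) = 3 * P"
    unfolding P_def by (rule cubic_multigraph_sum_vert[OF G])
  have square_rv: "(\<Sum>d\<in>D. S (vert (rv d)) ^ 2) = (\<Sum>d\<in>D. S (vert d) ^ 2)"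
    by (rule sum.reindex_bij_witness[of _ rv rv]) (auto simp: cubic_multigraphD[OF G])
  have "(\<Sum>d\<in>D. S (vert d) * S (vert (rv d)))
      = (\<Sum>v\<in>VG. \<Sum>d\<in>{d\<in>D. vert d = v}. S v * S (vert (rv d)))"
    by (auto simp: cubic_multigraph_sum_darts_at[OF G] intro!: sum.cong)
  also have "\<dots> = - 3 * P"
    by (simp add: P_def sum_distrib_left eig power2_eq_square mult.left_commute
        flip: sum_distrib_left[of "S _"])
  finally have cross: "(\<Sum>d\<in>D. S (vert d) * S (vert (rv d))) = - 3 * P" .
  have "(\<Sum>d\<in>D. (S (vert d) + S (vert (rv d))) ^ 2)
      = (\<Sum>d\<in>D. S (vert d) ^ 2) + 2 * (\<Sum>d\<in>D. S (vert d) * S (vert (rv d)))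
        + (\<Sum>d\<in>D. S (vert (rv d)) ^ 2)"
    by (simp add: power2_sum sum.distrib sum_distrib_left mult.assoc)
  also have "\<dots> = 0"
    using square square_rv cross by simp
  finally have "\<forall>d\<in>D. (S (vert d) + S (vert (rv d))) ^ 2 = 0"
    using G by (subst (asm) sum_nonneg_eq_0_iff) (auto simp: cubic_multigraph_def)
  then show ?thesis
    unfolding mg_alternating_def by (simp add: add_eq_0_iff2)
qed

lemma truncation_eigen_equation_alternating:
  fixes y :: "nat \<Rightarrow> real"
  assumes G: "cubic_multigraph VG D vert rv"
    and eq: "\<And>d. d \<in> D \<Longrightarrow> (\<Sum>d'\<in>{d'\<in>D. vert d' = vert d}. y d') - y d + y (rv d) = y d"
  obtains \<sigma> where "mg_alternating D vert rv \<sigma>" and "\<And>d. d \<in> D \<Longrightarrow> y d = \<sigma> (vert d)"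
proof -
  define S where "S v = (\<Sum>d\<in>{d\<in>D. vert d = v}. y d)" for v
  have S_rv: "S (vert (rv d)) = 3 * y d - 2 * S (vert d)" if "d \<in> D" for d
  proof -
    have "S (vert d) - y d + y (rv d) = y d"
      using eq[OF that] by (simp add: S_def)
    moreover have "S (vert (rv d)) - y (rv d) + y d = y (rv d)"
      using eq[OF cubic_multigraphD(2)[OF G that]] cubic_multigraphD(3)[OF G that] by (simp add: S_def)
    ultimately show ?thesis
      by linarith
  qed
  have "(\<Sum>d\<in>{d\<in>D. vert d = v}. S (vert (rv d))) = - 3 * S v" if "v \<in> VG" for v
  proof -
    have "(\<Sum>d\<in>{d\<in>D. vert d = v}. S (vert (rv d))) = (\<Sum>d\<in>{d\<in>D. vert d = v}. 3 * y d - 2 * S v)"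
      by (intro sum.cong) (auto simp: S_rv)
    also have "\<dots> = - 3 * S v"
      using cubic_multigraph_card_darts_at[OF G that]
      by (simp add: sum_subtractf S_def flip: sum_distrib_left)
    finally show ?thesis .
  qed
  then have alt: "mg_alternating D vert rv S"
    by (rule cubic_multigraph_alternating_if_eigenvalue_neg3[OF G])
  show thesis
  proof (rule that[of "\<lambda>v. S v / 3"])
    show "mg_alternating D vert rv (\<lambda>v. S v / 3)"
      using alt unfolding mg_alternating_def by simp
    show "y d = S (vert d) / 3" if "d \<in> D" for d
    proof -
      have "S (vert (rv d)) = - S (vert d)"
        using alt that by (simp add: mg_alternating_def)
      then show ?thesis
        using S_rv[OF that] by linarith
    qed
  qed
qed

lemma truncation_nbhd:
  assumes G: "cubic_multigraph VG D vert rv" and f: "bij_betw f UNIV D"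
    and iso: "\<And>x y. E x y \<longleftrightarrow> trunc_adj D vert rv (f x) (f y)"
  shows "f ` {j. E i j} = insert (rv (f i)) ({d\<in>D. vert d = vert (f i)} - {f i})"
proof -
  have fi: "f i \<in> D"
    using f bij_betwE by blast
  have "f ` {j. E i j} = {d\<in>D. trunc_adj D vert rv (f i) d}"
    using f by (auto simp: iso bij_betw_def trunc_adj_def)
  also have "\<dots> = insert (rv (f i)) ({d\<in>D. vert d = vert (f i)} - {f i})"
    using fi cubic_multigraphD(2,4)[OF G fi] by (auto simp: trunc_adj_def)
  finally show ?thesis .
qed

lemma truncation_nbhd_sum:
  fixes g :: "nat \<Rightarrow> 'b::ab_group_add"
  assumes G: "cubic_multigraph VG D vert rv" and loopless: "mg_loopless D vert rv"
    and f: "bij_betw f UNIV D" and iso: "\<And>x y. E x y \<longleftrightarrow> trunc_adj D vert rv (f x) (f y)"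
  shows "(\<Sum>j | E i j. g (f j)) = (\<Sum>d\<in>{d\<in>D. vert d = vert (f i)}. g d) - g (f i) + g (rv (f i))"
proof -
  have fi: "f i \<in> D"
    using f bij_betwE by blast
  have "inj_on f {j. E i j}"
    using f by (metis bij_betw_def inj_on_subset subset_UNIV)
  then have "(\<Sum>j | E i j. g (f j)) = (\<Sum>d\<in>f ` {j. E i j}. g d)"
    by (simp add: sum.reindex)
  also have "\<dots> = (\<Sum>d\<in>{d\<in>D. vert d = vert (f i)}. g d) - g (f i) + g (rv (f i))"
  proof -
    let ?A = "{d\<in>D. vert d = vert (f i)}"
    have fin: "finite ?A"
      using G by (simp add: cubic_multigraph_def)
    have "rv (f i) \<notin> ?A"
      using loopless fi by (auto simp: mg_loopless_def)
    then have "(\<Sum>d\<in>insert (rv (f i)) (?A - {f i}). g d) = g (rv (f i)) + (\<Sum>d\<in>?A - {f i}. g d)"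
      using fin by (intro sum.insert) auto
    also have "\<dots> = g (rv (f i)) + (\<Sum>d\<in>?A. g d) - g (f i)"
      using fin fi by (simp add: sum_diff1 algebra_simps)
    finally show ?thesis
      by (simp add: truncation_nbhd[OF G f iso])
  qed
  finally show ?thesis .
qed

lemma truncation_eigenspace_1_iff:
  fixes E :: "'a::finite \<Rightarrow> 'a \<Rightarrow> bool"
  assumes G: "cubic_multigraph VG D vert rv" and loopless: "mg_loopless D vert rv"
    and f: "bij_betw f UNIV D" and iso: "\<And>x y. E x y \<longleftrightarrow> trunc_adj D vert rv (f x) (f y)"
  shows "x \<in> eigenspace (adj_matrix E) 1 \<longleftrightarrow>
    (\<exists>\<sigma>. mg_alternating D vert rv \<sigma> \<and> (\<forall>i. x $ i = \<sigma> (vert (f i))))"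
proof
  assume x: "x \<in> eigenspace (adj_matrix E) 1"
  define y where "y d = x $ inv_into UNIV f d" for d
  have y_f: "y (f i) = x $ i" for i
    using f by (simp add: y_def bij_betw_def)
  have "(\<Sum>d'\<in>{d'\<in>D. vert d' = vert d}. y d') - y d + y (rv d) = y d" if "d \<in> D" for d
  proof -
    have "d \<in> range f"
      using f that by (simp add: bij_betw_def)
    then obtain i where "d = f i"
      by blast
    then show ?thesis
      using x truncation_nbhd_sum[OF G loopless f iso, where g = y and i = i]
      by (simp add: y_f eigenspace_adj_matrix_1_iff)
  qed
  then obtain \<sigma> where alt: "mg_alternating D vert rv \<sigma>" and y: "\<And>d. d \<in> D \<Longrightarrow> y d = \<sigma> (vert d)"
    using truncation_eigen_equation_alternating[OF G] by blast
  have "x $ i = \<sigma> (vert (f i))" for i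
    using y_f[of i] y[of "f i"] f by (simp add: bij_betwE)
  with alt show "\<exists>\<sigma>. mg_alternating D vert rv \<sigma> \<and> (\<forall>i. x $ i = \<sigma> (vert (f i)))"
    by blast
next
  assume "\<exists>\<sigma>. mg_alternating D vert rv \<sigma> \<and> (\<forall>i. x $ i = \<sigma> (vert (f i)))"
  then obtain \<sigma> where alt: "mg_alternating D vert rv \<sigma>" and x: "\<And>i. x $ i = \<sigma> (vert (f i))"
    by blast
  show "x \<in> eigenspace (adj_matrix E) 1"
    unfolding eigenspace_adj_matrix_1_iff
  proof
    fix i
    have fi: "f i \<in> D"
      using f bij_betwE by blast
    have "(\<Sum>j | E i j. x $ j) = (\<Sum>j | E i j. \<sigma> (vert (f j)))"
      by (simp add: x)
    also have "\<dots> = (\<Sum>d\<in>{d\<in>D. vert d = vert (f i)}. \<sigma> (vert d)) - \<sigma> (vert (f i)) + \<sigma> (vert (rv (f i)))"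
      by (rule truncation_nbhd_sum[OF G loopless f iso])
    also have "\<dots> = x $ i"
      using alt fi cubic_multigraph_sum_darts_at_vert[OF G cubic_multigraphD(1)[OF G fi], of \<sigma>]
      by (simp add: x mg_alternating_def)
    finally show "(\<Sum>j | E i j. x $ j) = x $ i" .
  qed
qed

lemma mg_alternating_eq_0_if_not_bipartite:
  assumes G: "cubic_multigraph VG D vert rv" and conn: "mg_connected VG D vert rv"
    and not_bipartite: "\<not> mg_bipartite VG D vert rv"
    and alt: "mg_alternating D vert rv \<sigma>" and v: "v \<in> VG"
  shows "\<sigma> v = 0"
proof (rule ccontr)
  assume nonzero: "\<sigma> v \<noteq> 0"
  have abs_eq: "\<bar>\<sigma> u\<bar> = \<bar>\<sigma> v\<bar>" if "u \<in> VG" for u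
    using alt by (intro mg_connected_invariant[OF conn _ that v]) (simp add: mg_alternating_def)
  have "(\<sigma> (vert d) > 0) \<noteq> (\<sigma> (vert (rv d)) > 0)" if "d \<in> D" for d
  proof -
    have "\<sigma> (vert d) \<noteq> 0"
      using nonzero abs_eq[OF cubic_multigraphD(1)[OF G that]] by auto
    moreover have "\<sigma> (vert (rv d)) = - \<sigma> (vert d)"
      using alt that by (simp add: mg_alternating_def)
    ultimately show ?thesis
      by linarith
  qed
  then have "mg_bipartite VG D vert rv"
    unfolding mg_bipartite_def by (intro exI[of _ "\<lambda>u. \<sigma> u > 0"]) blast
  with not_bipartite show False ..
qed

lemma mg_alternating_multiple_of_colouring:
  assumes conn: "mg_connected VG D vert rv"
    and colouring: "\<forall>d\<in>D. c (vert d) \<noteq> c (vert (rv d))"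
    and alt: "mg_alternating D vert rv \<sigma>"
  obtains k where "\<And>v. v \<in> VG \<Longrightarrow> \<sigma> v = k * (if c v then 1 else -1)"
proof (cases "VG = {}")
  case False
  then obtain v0 where v0: "v0 \<in> VG"
    by blast
  define s :: "nat \<Rightarrow> real" where "s v = (if c v then 1 else -1)" for v
  have "\<sigma> v * s v = \<sigma> v0 * s v0" if "v \<in> VG" for v
    using alt colouring
    by (intro mg_connected_invariant[OF conn _ that v0]) (auto simp: mg_alternating_def s_def)
  then have "\<sigma> v = (\<sigma> v0 * s v0) * s v" if "v \<in> VG" for v
    using that by (force simp: s_def)
  then show thesis
    using that by (simp add: s_def)
qed (use that in blast)

lemma truncation_eigenspace_1_trivial:
  fixes E :: "'a::finite \<Rightarrow> 'a \<Rightarrow> bool"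
  assumes G: "cubic_multigraph VG D vert rv" and loopless: "mg_loopless D vert rv"
    and conn: "mg_connected VG D vert rv" and not_bipartite: "\<not> mg_bipartite VG D vert rv"
    and f: "bij_betw f UNIV D" and iso: "\<And>x y. E x y \<longleftrightarrow> trunc_adj D vert rv (f x) (f y)"
  shows "eigenspace (adj_matrix E) 1 \<subseteq> {0}"
proof
  fix x assume "x \<in> eigenspace (adj_matrix E) 1"
  then obtain \<sigma> where alt: "mg_alternating D vert rv \<sigma>" and x: "\<And>i. x $ i = \<sigma> (vert (f i))"
    using truncation_eigenspace_1_iff[OF G loopless f iso] by blast
  have "vert (f i) \<in> VG" for i
    using f G by (simp add: bij_betwE cubic_multigraphD(1))
  then show "x \<in> {0}"
    using mg_alternating_eq_0_if_not_bipartite[OF G conn not_bipartite alt]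
    by (simp add: vec_eq_iff x)
qed

lemma truncation_eigenspace_1_eq_span:
  fixes E :: "'a::finite \<Rightarrow> 'a \<Rightarrow> bool"
  assumes G: "cubic_multigraph VG D vert rv" and loopless: "mg_loopless D vert rv"
    and conn: "mg_connected VG D vert rv" and colouring: "\<forall>d\<in>D. c (vert d) \<noteq> c (vert (rv d))"
    and f: "bij_betw f UNIV D" and iso: "\<And>x y. E x y \<longleftrightarrow> trunc_adj D vert rv (f x) (f y)"
  shows "eigenspace (adj_matrix E) 1 = span {\<chi> i. if c (vert (f i)) then 1 else -1}"
    (is "_ = span {?w}")
proof
  note eigenspace_iff = truncation_eigenspace_1_iff[OF G loopless f iso]
  show "eigenspace (adj_matrix E) 1 \<subseteq> span {?w}"
  proof
    fix x assume "x \<in> eigenspace (adj_matrix E) 1"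
    then obtain \<sigma> where alt: "mg_alternating D vert rv \<sigma>" and x: "\<And>i. x $ i = \<sigma> (vert (f i))"
      using eigenspace_iff by blast
    obtain k where "\<And>v. v \<in> VG \<Longrightarrow> \<sigma> v = k * (if c v then 1 else -1)"
      using mg_alternating_multiple_of_colouring[OF conn colouring alt] by blast
    moreover have "vert (f i) \<in> VG" for i
      using f G by (simp add: bij_betwE cubic_multigraphD(1))
    ultimately have "x = k *\<^sub>R ?w"
      by (simp add: vec_eq_iff x)
    then show "x \<in> span {?w}"
      by (auto simp: span_singleton)
  qed
  show "span {?w} \<subseteq> eigenspace (adj_matrix E) 1"
  proof
    fix x assume "x \<in> span {?w}"
    then obtain k where x: "x = k *\<^sub>R ?w"
      by (auto simp: span_singleton)
    have "mg_alternating D vert rv (\<lambda>v. k * (if c v then 1 else -1))"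
      using colouring by (auto simp: mg_alternating_def)
    then show "x \<in> eigenspace (adj_matrix E) 1"
      unfolding eigenspace_iff by (auto simp: x)
  qed
qed

lemma simple_eigenvalue_1_truncation_iff_bipartite:
  fixes E :: "'a::finite \<Rightarrow> 'a \<Rightarrow> bool"
  assumes G: "cubic_multigraph VG D vert rv" and loopless: "mg_loopless D vert rv"
    and conn: "mg_connected VG D vert rv" and iso: "iso_to_truncation E D vert rv"
  shows "simple_eigenvalue (adj_matrix E) 1 \<longleftrightarrow> mg_bipartite VG D vert rv"
proof -
  obtain f where f: "bij_betw f UNIV D" and iso_f: "\<And>x y. E x y \<longleftrightarrow> trunc_adj D vert rv (f x) (f y)"
    using iso unfolding iso_to_truncation_def by blast
  show ?thesis
  proof
    assume "simple_eigenvalue (adj_matrix E) 1"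
    then show "mg_bipartite VG D vert rv"
      using truncation_eigenspace_1_trivial[OF G loopless conn _ f iso_f]
        not_simple_eigenvalue_if_eigenspace_trivial by blast
  next
    assume "mg_bipartite VG D vert rv"
    then obtain c :: "nat \<Rightarrow> bool" where colouring: "\<forall>d\<in>D. c (vert d) \<noteq> c (vert (rv d))"
      unfolding mg_bipartite_def by blast
    have "(\<chi> i. if c (vert (f i)) then 1 else -1) \<noteq> (0 :: real^'a)"
      by (simp add: vec_eq_iff)
    then show "simple_eigenvalue (adj_matrix E) 1"
      by (simp add: simple_eigenvalue_def dim_span dim_singleton
          truncation_eigenspace_1_eq_span[OF G loopless conn colouring f iso_f])
  qed
qed

section \<open>Cubic vertex-transitive graphs with a triangle\<close>

lemma card_3_eq:
  assumes "card S = 3" "a \<in> S" "b \<in> S" "c \<in> S" "distinct [a, b, c]"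
  shows "S = {a, b, c}"
proof -
  have "finite S"
    using assms(1) card.infinite by fastforce
  moreover have "{a, b, c} \<subseteq> S" "card {a, b, c} = card S"
    using assms by auto
  ultimately show ?thesis
    using card_subset_eq by metis
qed

lemma card_3_obtain_third:
  assumes "card S = 3" "a \<in> S" "b \<in> S" "a \<noteq> b"
  obtains t where "S = {a, b, t}" "t \<noteq> a" "t \<noteq> b"
proof -
  have "finite S"
    using assms(1) card.infinite by fastforce
  then have "card (S - {a, b}) = 1"
    using assms by (simp add: card_Diff_subset)
  then obtain t where "S - {a, b} = {t}"
    by (auto simp: card_Suc_eq)
  then show thesis
    using that assms(2,3) by blast
qed

lemma simple_graphD:
  assumes "simple_graph E"
  shows "E u v \<Longrightarrow> E v u" "\<not> E v v"
  using assms unfolding simple_graph_def by auto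

lemma cubic_graphD:
  assumes "cubic_graph E"
  shows "E u v \<Longrightarrow> E v u" "\<not> E v v" "card {u. E v u} = 3"
  using assms unfolding cubic_graph_def simple_graph_def by auto

lemma graph_automorphism_adj_iff:
  "graph_automorphism E h \<Longrightarrow> E (h x) (h y) \<longleftrightarrow> E x y"
  unfolding graph_automorphism_def by blast

lemma graph_automorphism_nbhd:
  assumes h: "graph_automorphism E h"
  shows "{u. E (h v) u} = h ` {u. E v u}"
proof -
  have "surj h"
    using h unfolding graph_automorphism_def by (simp add: bij_is_surj)
  then show ?thesis
    using graph_automorphism_adj_iff[OF h] by (auto simp: image_iff) (metis surjD)
qed

lemma vertex_transitive_invariant:
  assumes "vertex_transitive E" and "P v0"
    and "\<And>h v. graph_automorphism E h \<Longrightarrow> P v \<Longrightarrow> P (h v)"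
  shows "P v"
  using assms unfolding vertex_transitive_def by metis

definition nbhd_clique :: "('a \<Rightarrow> 'a \<Rightarrow> bool) \<Rightarrow> 'a \<Rightarrow> bool" where
  "nbhd_clique E v \<longleftrightarrow> (\<forall>a b. E v a \<longrightarrow> E v b \<longrightarrow> a \<noteq> b \<longrightarrow> E a b)"

definition in_unique_triangle :: "('a \<Rightarrow> 'a \<Rightarrow> bool) \<Rightarrow> 'a \<Rightarrow> bool" where
  "in_unique_triangle E v \<longleftrightarrow>
     (\<exists>a b c. distinct [a, b, c] \<and> {u. E v u} = {a, b, c} \<and> E a b \<and> \<not> E a c \<and> \<not> E b c)"

lemma nbhd_clique_automorphism:
  assumes h: "graph_automorphism E h" and clique: "nbhd_clique E v"
  shows "nbhd_clique E (h v)"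
proof -
  have "surj h"
    using h unfolding graph_automorphism_def by (simp add: bij_is_surj)
  then show ?thesis
    using clique graph_automorphism_adj_iff[OF h] unfolding nbhd_clique_def by (metis surjD)
qed

lemma in_unique_triangle_automorphism:
  assumes h: "graph_automorphism E h" and unique: "in_unique_triangle E v"
  shows "in_unique_triangle E (h v)"
proof -
  obtain a b c where abc: "distinct [a, b, c]" "{u. E v u} = {a, b, c}" "E a b" "\<not> E a c" "\<not> E b c"
    using unique unfolding in_unique_triangle_def by blast
  have "inj h"
    using h unfolding graph_automorphism_def by (simp add: bij_is_inj)
  then have "distinct [h a, h b, h c]"
    using abc(1) by (simp add: inj_eq)
  moreover have "{u. E (h v) u} = {h a, h b, h c}"
    using graph_automorphism_nbhd[OF h, of v] abc(2) by simp
  ultimately show ?thesis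
    unfolding in_unique_triangle_def using abc(3-5) graph_automorphism_adj_iff[OF h] by blast
qed

lemma in_unique_triangle_if_edge_in_two_triangles:
  assumes cubic: "cubic_graph E" and N: "{u. E x u} = {y, z, w}" and yzw: "distinct [y, z, w]"
    and edges: "E y z" "E y w" "\<not> E z w"
  shows "in_unique_triangle E z"
proof -
  note sym = cubic_graphD(1)[OF cubic] and irrefl = cubic_graphD(2)[OF cubic]
    and card = cubic_graphD(3)[OF cubic]
  have xy: "E x y" "E y x" "E z x" "distinct [x, y, z, w]"
    using N yzw irrefl sym by auto
  obtain t where Nz: "{u. E z u} = {x, y, t}" and t: "t \<noteq> x" "t \<noteq> y"
    using card_3_obtain_third[OF card[of z], of x y] xy sym edges(1) by auto
  have "t \<noteq> w" "t \<noteq> z"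
    using Nz edges(3) irrefl by auto
  moreover have "{u. E y u} = {x, z, w}"
    using card_3_eq[OF card[of y], of x z w] xy edges by auto
  ultimately have "\<not> E x t" "\<not> E y t"
    using N t by auto
  then show ?thesis
    unfolding in_unique_triangle_def using Nz xy t by (intro exI[of _ x] exI[of _ y] exI[of _ t]) auto
qed

lemma cubic_triangle_nbhd_clique_or_unique:
  assumes cubic: "cubic_graph E" and "has_triangle E"
  shows "(\<exists>v. nbhd_clique E v) \<or> (\<exists>v. in_unique_triangle E v)"
proof -
  note sym = cubic_graphD(1)[OF cubic] and card = cubic_graphD(3)[OF cubic]
  obtain a b c where abc: "distinct [a, b, c]" "E a b" "E b c" "E c a"
    using assms(2) unfolding has_triangle_def by auto
  obtain w where N: "{u. E a u} = {b, c, w}" and w: "w \<noteq> b" "w \<noteq> c"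
    using card_3_obtain_third[OF card[of a], of b c] abc sym by auto
  consider "E b w" "E c w" | "\<not> E b w" "\<not> E c w" | "E b w" "\<not> E c w" | "\<not> E b w" "E c w"
    by blast
  then show ?thesis
  proof cases
    case 1
    have "E p q" if "p \<in> {b, c, w}" "q \<in> {b, c, w}" "p \<noteq> q" for p q
      using that 1 abc(3) sym by auto
    then have "nbhd_clique E a"
      unfolding nbhd_clique_def using N by blast
    then show ?thesis by blast
  next
    case 2
    then have "in_unique_triangle E a"
      unfolding in_unique_triangle_def using N abc(1,3) w
      by (intro exI[of _ b] exI[of _ c] exI[of _ w]) (simp add: eq_commute[of w])
    then show ?thesis by blast
  next
    case 3
    then have "in_unique_triangle E c"
      using in_unique_triangle_if_edge_in_two_triangles[OF cubic N] abc w by auto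
    then show ?thesis by blast
  next
    case 4
    have "{u. E a u} = {c, b, w}"
      using N by auto
    then have "in_unique_triangle E b"
      using in_unique_triangle_if_edge_in_two_triangles[OF cubic] 4 abc w sym by auto
    then show ?thesis by blast
  qed
qed

lemma nbhd_clique_not_simple_eigenvalue_1:
  fixes E :: "'a::finite \<Rightarrow> 'a \<Rightarrow> bool"
  assumes cubic: "cubic_graph E" and clique: "\<And>v. nbhd_clique E v"
  shows "\<not> simple_eigenvalue (adj_matrix E) 1"
proof (rule not_simple_eigenvalue_if_eigenspace_trivial, rule subsetI)
  note sym = cubic_graphD(1)[OF cubic] and irrefl = cubic_graphD(2)[OF cubic]
    and card = cubic_graphD(3)[OF cubic]
  fix x :: "real^'a"
  assume "x \<in> eigenspace (adj_matrix E) 1"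
  then have eig: "\<And>i. (\<Sum>j | E i j. x $ j) = x $ i"
    by (simp add: eigenspace_adj_matrix_1_iff)
  have edge: "x $ u = x $ v" if uv: "E u v" for u v
  proof -
    let ?B = "{w. E u w} - {v}"
    have "?B \<subseteq> {w. E v w}"
      using clique[of u] uv unfolding nbhd_clique_def by blast
    moreover have "u \<in> {w. E v w}" "u \<notin> ?B"
      using sym[OF uv] irrefl[of u] by auto
    moreover have "card ?B = 2"
      using card[of u] uv by simp
    ultimately have Nv: "{w. E v w} = insert u ?B"
      using card[of v] by (intro card_subset_eq[symmetric]) (auto simp: card_insert_if)
    have "x $ u = x $ v + sum (($) x) ?B"
      using eig[of u] uv by (simp add: sum.remove[of _ v])
    moreover have "x $ v = x $ u + sum (($) x) ?B"
      using eig[of v] \<open>u \<notin> ?B\<close> by (simp add: Nv)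
    ultimately show ?thesis
      by linarith
  qed
  have "x $ i = 0" for i
  proof -
    have "x $ i = (\<Sum>j | E i j. x $ i)"
      using eig[of i] edge by (metis (mono_tags, lifting) mem_Collect_eq sum.cong)
    then show ?thesis
      using card[of i] by simp
  qed
  then show "x \<in> {0}"
    by (simp add: vec_eq_iff)
qed

section \<open>Contracting the triangles\<close>

locale unique_triangle_graph =
  fixes E :: "'a::finite \<Rightarrow> 'a \<Rightarrow> bool"
  assumes simple: "simple_graph E" and unique_triangle: "\<And>v. in_unique_triangle E v"
begin

lemma sym: "E u v \<Longrightarrow> E v u"
  using simple by (rule simple_graphD)

lemma irrefl: "\<not> E v v"
  using simple by (rule simple_graphD)

definition triangle :: "'a \<Rightarrow> 'a set" where
  "triangle v = insert v {u. E v u \<and> (\<exists>w. E v w \<and> E u w)}"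

definition outer :: "'a \<Rightarrow> 'a" where
  "outer v = (SOME u. E v u \<and> u \<notin> triangle v)"

lemma triangle_nbhd:
  obtains a b c where "distinct [v, a, b, c]" "{u. E v u} = {a, b, c}"
    "triangle v = {v, a, b}" "c \<notin> triangle v"
proof -
  obtain a b c where abc: "distinct [a, b, c]" "{u. E v u} = {a, b, c}" "E a b" "\<not> E a c" "\<not> E b c"
    using unique_triangle[of v] unfolding in_unique_triangle_def by blast
  have nbhd: "E v u \<longleftrightarrow> u = a \<or> u = b \<or> u = c" for u
    using abc(2) by blast
  have v: "v \<notin> {a, b, c}"
    using abc(2) irrefl by blast
  have "\<not> E c a" "\<not> E c b" "\<not> E c c" "E b a"
    using abc(3-5) sym irrefl by blast+
  then have "c \<notin> triangle v"
    using v unfolding triangle_def nbhd by auto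
  moreover have "triangle v = {v, a, b}"
    using abc(3) \<open>E b a\<close> calculation unfolding triangle_def nbhd by auto
  ultimately show thesis
    using that abc(1,2) v by auto
qed

lemma self_in_triangle: "v \<in> triangle v"
  unfolding triangle_def by simp

lemma card_triangle: "card (triangle v) = 3"
proof -
  obtain a b c where "distinct [v, a, b, c]" "triangle v = {v, a, b}"
    by (rule triangle_nbhd)
  then show ?thesis
    by simp
qed

lemma triangle_eq:
  assumes u: "u \<in> triangle v"
  shows "triangle u = triangle v"
proof (cases "u = v")
  case False
  then obtain w where vu: "E v u" and w: "E v w" "E u w"
    using u unfolding triangle_def by auto
  have distinct: "distinct [u, v, w]"
    using False vu w irrefl by auto
  have "v \<in> triangle u" "w \<in> triangle u" "w \<in> triangle v"
    using vu w sym unfolding triangle_def by blast+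
  then have "triangle u = {u, v, w}" "triangle v = {v, u, w}"
    using card_3_eq[OF card_triangle self_in_triangle] u distinct by auto
  then show ?thesis
    by auto
qed simp

lemma triangle_eq_iff: "triangle u = triangle v \<longleftrightarrow> u \<in> triangle v"
  using triangle_eq self_in_triangle by metis

lemma outer: "E v (outer v)" "outer v \<notin> triangle v"
proof -
  obtain a b c where "{u. E v u} = {a, b, c}" "c \<notin> triangle v"
    by (rule triangle_nbhd)
  then have "\<exists>u. E v u \<and> u \<notin> triangle v"
    by auto
  then have "E v (outer v) \<and> outer v \<notin> triangle v"
    unfolding outer_def by (rule someI_ex)
  then show "E v (outer v)" "outer v \<notin> triangle v"
    by auto
qed

lemma adj_iff: "E v u \<longleftrightarrow> (u \<in> triangle v \<and> u \<noteq> v) \<or> u = outer v"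
proof -
  obtain a b c where abc: "distinct [v, a, b, c]" "{u. E v u} = {a, b, c}"
      "triangle v = {v, a, b}" "c \<notin> triangle v"
    by (rule triangle_nbhd)
  moreover have "outer v = c"
    using outer[of v] abc by auto
  ultimately show ?thesis
    by auto
qed

lemma outer_outer: "outer (outer v) = v"
proof -
  have "v \<notin> triangle (outer v)"
  proof
    assume "v \<in> triangle (outer v)"
    then have "outer v \<in> triangle v"
      using triangle_eq self_in_triangle by blast
    with outer(2) show False ..
  qed
  then show ?thesis
    using adj_iff[of "outer v" v] sym[OF outer(1)[of v]] by auto
qed

lemma automorphism_triangle:
  assumes h: "graph_automorphism E h"
  shows "triangle (h v) = h ` triangle v"
proof -
  have surj: "surj h" and inj: "inj h"
    using h unfolding graph_automorphism_def by (auto simp: bij_is_surj bij_is_inj)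
  note adj = graph_automorphism_adj_iff[OF h]
  have mem: "h u \<in> triangle (h v) \<longleftrightarrow> u \<in> triangle v" for u
  proof -
    have "(\<exists>w. E (h v) w \<and> E (h u) w) \<longleftrightarrow> (\<exists>w. E v w \<and> E u w)"
      using surj adj by (metis surjD)
    then show ?thesis
      unfolding triangle_def by (simp add: adj inj_eq[OF inj])
  qed
  show ?thesis
  proof (rule set_eqI)
    fix x
    obtain u where "x = h u"
      using surj by (metis surjD)
    then show "x \<in> triangle (h v) \<longleftrightarrow> x \<in> h ` triangle v"
      using mem by (auto simp: inj_image_mem_iff[OF inj])
  qed
qed

lemma automorphism_outer:
  assumes h: "graph_automorphism E h"
  shows "outer (h v) = h (outer v)"
proof -
  have "inj h"
    using h unfolding graph_automorphism_def by (simp add: bij_is_inj)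
  then have "h (outer v) \<notin> triangle (h v)"
    using outer(2)[of v] by (simp add: automorphism_triangle[OF h] inj_image_mem_iff)
  moreover have "E (h v) (h (outer v))"
    using outer(1) graph_automorphism_adj_iff[OF h] by simp
  ultimately show ?thesis
    using adj_iff[of "h v" "h (outer v)"] by auto
qed

text \<open>The contracted multigraph has the triangles as vertices, each named by the least code of its
  members, and the codes of the vertices of X as darts: the dart coded by v lies at the triangle of v
  and is reversed along the outer edge at v.\<close>

definition tri_index :: "'a \<Rightarrow> nat" where
  "tri_index v = Min (to_nat ` triangle v)"

definition contr_vert :: "nat \<Rightarrow> nat" where
  "contr_vert d = tri_index (from_nat d)"

definition contr_rev :: "nat \<Rightarrow> nat" where
  "contr_rev d = to_nat (outer (from_nat d))"

lemma contr_vert_to_nat [simp]: "contr_vert (to_nat v) = tri_index v"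
  by (simp add: contr_vert_def)

lemma contr_rev_to_nat [simp]: "contr_rev (to_nat v) = to_nat (outer v)"
  by (simp add: contr_rev_def)

lemma tri_index_in_triangle: "from_nat (tri_index v) \<in> triangle v"
proof -
  have "tri_index v \<in> to_nat ` triangle v"
    unfolding tri_index_def using self_in_triangle by (intro Min_in) auto
  then show ?thesis
    by auto
qed

lemma tri_index_eq_iff: "tri_index u = tri_index v \<longleftrightarrow> u \<in> triangle v"
proof
  assume "tri_index u = tri_index v"
  then have "triangle u = triangle v"
    using tri_index_in_triangle[of u] tri_index_in_triangle[of v] triangle_eq by metis
  then show "u \<in> triangle v"
    using triangle_eq_iff by blast
qed (simp add: tri_index_def triangle_eq)

lemma darts_at_tri_index:
  "{d \<in> range (to_nat :: 'a \<Rightarrow> nat). contr_vert d = tri_index v} = to_nat ` triangle v"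
  by (auto simp: tri_index_eq_iff)

lemma contraction_cubic_multigraph:
  "cubic_multigraph (range tri_index) (range (to_nat :: 'a \<Rightarrow> nat)) contr_vert contr_rev"
  unfolding cubic_multigraph_def
proof (intro conjI ballI)
  fix d assume "d \<in> range (to_nat :: 'a \<Rightarrow> nat)"
  then obtain v :: 'a where d: "d = to_nat v"
    by blast
  have "outer v \<noteq> v"
    using outer(2) self_in_triangle by metis
  then show "contr_vert d \<in> range tri_index" "contr_rev d \<in> range (to_nat :: 'a \<Rightarrow> nat)"
    "contr_rev (contr_rev d) = d" "contr_rev d \<noteq> d"
    by (simp_all add: d outer_outer)
next
  fix u assume "u \<in> range tri_index"
  then obtain v where u: "u = tri_index v"
    by blast
  show "card {d \<in> range (to_nat :: 'a \<Rightarrow> nat). contr_vert d = u} = 3"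
    by (simp add: u darts_at_tri_index card_image card_triangle)
qed simp_all

lemma contraction_loopless: "mg_loopless (range (to_nat :: 'a \<Rightarrow> nat)) contr_vert contr_rev"
  unfolding mg_loopless_def using outer(2) by (auto simp: tri_index_eq_iff)

lemma iso_to_truncation_contraction:
  "iso_to_truncation E (range (to_nat :: 'a \<Rightarrow> nat)) contr_vert contr_rev"
  unfolding iso_to_truncation_def
proof (intro exI[of _ "to_nat :: 'a \<Rightarrow> nat"] conjI allI)
  show "bij_betw (to_nat :: 'a \<Rightarrow> nat) UNIV (range (to_nat :: 'a \<Rightarrow> nat))"
    by (simp add: bij_betw_def)
  fix x y :: 'a
  have "trunc_adj (range (to_nat :: 'a \<Rightarrow> nat)) contr_vert contr_rev (to_nat x) (to_nat y)
      \<longleftrightarrow> (x \<noteq> y \<and> tri_index x = tri_index y) \<or> y = outer x"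
    by (auto simp: trunc_adj_def)
  also have "\<dots> \<longleftrightarrow> E x y"
    by (metis adj_iff tri_index_eq_iff)
  finally show
    "E x y \<longleftrightarrow> trunc_adj (range (to_nat :: 'a \<Rightarrow> nat)) contr_vert contr_rev (to_nat x) (to_nat y)"
    by simp
qed

lemma contraction_connected:
  assumes conn: "connected_graph E"
  shows "mg_connected (range tri_index) (range (to_nat :: 'a \<Rightarrow> nat)) contr_vert contr_rev"
  unfolding mg_connected_def
proof (intro ballI)
  fix u v assume "u \<in> range tri_index" "v \<in> range tri_index"
  then obtain p q where u: "u = tri_index p" and v: "v = tri_index q"
    by blast
  have "E\<^sup>*\<^sup>* p q"
    using conn unfolding connected_graph_def by blast
  then have
    "(mg_adj (range (to_nat :: 'a \<Rightarrow> nat)) contr_vert contr_rev)\<^sup>*\<^sup>* (tri_index p) (tri_index q)"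
  proof induction
    case (step y z)
    then consider "z \<in> triangle y" | "z = outer y"
      using adj_iff by blast
    then show ?case
    proof cases
      case 1
      then have "tri_index z = tri_index y"
        by (simp add: tri_index_eq_iff)
      with step.IH show ?thesis
        by simp
    next
      case 2
      then have "mg_adj (range (to_nat :: 'a \<Rightarrow> nat)) contr_vert contr_rev (tri_index y) (tri_index z)"
        unfolding mg_adj_def by (intro bexI[of _ "to_nat y"]) simp_all
      with step.IH show ?thesis
        by simp
    qed
  qed simp
  then show "(mg_adj (range (to_nat :: 'a \<Rightarrow> nat)) contr_vert contr_rev)\<^sup>*\<^sup>* u v"
    by (simp add: u v)
qed

lemma contraction_automorphism:
  assumes h: "graph_automorphism E h"
  shows "mg_automorphism (range tri_index) (range (to_nat :: 'a \<Rightarrow> nat)) contr_vert contr_rev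
    (\<lambda>u. tri_index (h (from_nat u))) (\<lambda>d. to_nat (h (from_nat d)))"
proof -
  define \<phi> where "\<phi> u = tri_index (h (from_nat u))" for u
  define \<psi> where "\<psi> d = to_nat (h (from_nat d))" for d
  have inj: "inj h"
    using h unfolding graph_automorphism_def by (simp add: bij_is_inj)
  have \<phi>_tri_index: "\<phi> (tri_index v) = tri_index (h v)" for v
    using tri_index_in_triangle[of v]
    by (simp add: \<phi>_def tri_index_eq_iff automorphism_triangle[OF h])
  have "inj_on \<phi> (range tri_index)"
  proof (rule inj_onI, clarify)
    fix u v assume "\<phi> (tri_index u) = \<phi> (tri_index v)"
    then have "h u \<in> h ` triangle v"
      by (simp add: \<phi>_tri_index tri_index_eq_iff automorphism_triangle[OF h])
    then show "tri_index u = tri_index v"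
      by (simp add: inj_image_mem_iff[OF inj] tri_index_eq_iff)
  qed
  moreover have "\<phi> ` range tri_index \<subseteq> range tri_index"
    by (auto simp: \<phi>_tri_index)
  ultimately have bij_\<phi>: "bij_betw \<phi> (range tri_index) (range tri_index)"
    by (simp add: bij_betw_def endo_inj_surj)
  have "inj_on \<psi> (range (to_nat :: 'a \<Rightarrow> nat))"
    by (rule inj_onI) (auto simp: \<psi>_def inj_eq[OF inj])
  moreover have "\<psi> ` range (to_nat :: 'a \<Rightarrow> nat) \<subseteq> range (to_nat :: 'a \<Rightarrow> nat)"
    by (auto simp: \<psi>_def)
  ultimately have bij_\<psi>: "bij_betw \<psi> (range (to_nat :: 'a \<Rightarrow> nat)) (range (to_nat :: 'a \<Rightarrow> nat))"
    by (simp add: bij_betw_def endo_inj_surj)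
  have "contr_vert (\<psi> d) = \<phi> (contr_vert d) \<and> contr_rev (\<psi> d) = \<psi> (contr_rev d)"
    if "d \<in> range (to_nat :: 'a \<Rightarrow> nat)" for d
    using that by (auto simp: \<psi>_def \<phi>_tri_index automorphism_outer[OF h])
  with bij_\<phi> bij_\<psi> show ?thesis
    unfolding mg_automorphism_def \<phi>_def \<psi>_def by auto
qed

lemma contraction_arc_transitive:
  assumes "vertex_transitive E"
  shows "mg_arc_transitive (range tri_index) (range (to_nat :: 'a \<Rightarrow> nat)) contr_vert contr_rev"
  unfolding mg_arc_transitive_def
proof (intro ballI)
  fix d d' assume "d \<in> range (to_nat :: 'a \<Rightarrow> nat)" "d' \<in> range (to_nat :: 'a \<Rightarrow> nat)"
  then obtain p q :: 'a where "d = to_nat p" "d' = to_nat q"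
    by blast
  moreover obtain h where "graph_automorphism E h" "h p = q"
    using assms unfolding vertex_transitive_def by blast
  ultimately show "\<exists>\<phi> \<psi>. mg_automorphism (range tri_index) (range (to_nat :: 'a \<Rightarrow> nat))
      contr_vert contr_rev \<phi> \<psi> \<and> \<psi> d = d'"
    using contraction_automorphism by fastforce
qed

end

theorem corollary6p4:
  fixes E :: "'a::finite \<Rightarrow> 'a \<Rightarrow> bool"
  assumes "cubic_graph E"
    and "connected_graph E"
    and "vertex_transitive E"
    and "has_triangle E"
  shows "simple_eigenvalue (adj_matrix E) 1 \<longleftrightarrow>
    (\<exists>VG D vert rv. cubic_multigraph VG D vert rv \<and> mg_connected VG D vert rv \<and>
        mg_bipartite VG D vert rv \<and> mg_arc_transitive VG D vert rv \<and>
        iso_to_truncation E D vert rv)"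
proof
  assume simple_1: "simple_eigenvalue (adj_matrix E) 1"
  have "\<not> nbhd_clique E v" for v
  proof
    assume "nbhd_clique E v"
    then have "nbhd_clique E u" for u
      by (rule vertex_transitive_invariant[OF assms(3), where P = "nbhd_clique E"])
        (rule nbhd_clique_automorphism)
    with simple_1 show False
      using nbhd_clique_not_simple_eigenvalue_1[OF assms(1)] by blast
  qed
  then obtain v where "in_unique_triangle E v"
    using cubic_triangle_nbhd_clique_or_unique[OF assms(1,4)] by blast
  then have "in_unique_triangle E u" for u
    by (rule vertex_transitive_invariant[OF assms(3), where P = "in_unique_triangle E"])
      (rule in_unique_triangle_automorphism)
  then interpret unique_triangle_graph E
    using assms(1) by unfold_locales (simp_all add: cubic_graph_def)
  note G = contraction_cubic_multigraph and conn = contraction_connected[OF assms(2)]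
  have "mg_bipartite (range tri_index) (range (to_nat :: 'a \<Rightarrow> nat)) contr_vert contr_rev"
    using simple_eigenvalue_1_truncation_iff_bipartite[OF G contraction_loopless conn
        iso_to_truncation_contraction] simple_1 by blast
  with G conn show "\<exists>VG D vert rv. cubic_multigraph VG D vert rv \<and> mg_connected VG D vert rv \<and>
      mg_bipartite VG D vert rv \<and> mg_arc_transitive VG D vert rv \<and> iso_to_truncation E D vert rv"
    using contraction_arc_transitive[OF assms(3)] iso_to_truncation_contraction by blast
next
  assume "\<exists>VG D vert rv. cubic_multigraph VG D vert rv \<and> mg_connected VG D vert rv \<and>
      mg_bipartite VG D vert rv \<and> mg_arc_transitive VG D vert rv \<and> iso_to_truncation E D vert rv"
  then show "simple_eigenvalue (adj_matrix E) 1"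
    using simple_eigenvalue_1_truncation_iff_bipartite mg_bipartite_loopless by blast
qed

end
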